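(* Let $G = (V, E, b, c)$ be a weighted hypergraph in which every vertex belongs to some edge, let $\mathtt{OPT}$ be a minimum-cost edge cover of $G$, and run procedure COVER on the stream of edges of $G$. Let $0 < \epsilon < 1$ and let $r^*$ be the largest integer such that $b(I(\leq r^* )) \leq \epsilon \cdot b(V)$, where $I(\leq r) = \{ v \in V \mid \mathrm{eff}_\infty(v) \leq r \}$. Then the edge collection $S(> r^* ) = \{ e \in E \mid \exists v \in V \text{ with } \mathrm{eff}_\infty(v) > r^* \text{ and } \mathrm{eid}_\infty(v) = \mathrm{id}(e) \}$ satisfies \[ c(S(> r^* )) < 8 \cdot c(\mathtt{OPT}) / \epsilon. \]
   Context: A weighted hypergraph $G = (V, E, b, c)$ has vertex set $V$, a multiset $E$ of non-empty edges $e \subseteq V$, benefits $b : V \to \mathbb{Q}_{>0}$ and costs $c : E \to \mathbb{Q}_{>0}$; $b(U) = \sum_{v \in U} b(v)$, $c(F) = \sum_{e \in F} c(e)$. An edge cover is a set $F \subseteq E$ whose union is $V$. Edges arrive in a stream $e_0, e_1, \dots$, and $\mathrm{id}(e)$ is a unique identifier of edge $e$. Procedure COVER maintains for each $v \in V$ a variable $\mathrm{eid}(v)$ (initially NULL) and an integer variable $\mathrm{eff}(v)$ (initially $-\infty$); $\mathrm{eff}_t(v)$ denotes its value just before $e_t$ is processed, and $\mathrm{eff}_\infty(v)$, $\mathrm{eid}_\infty(v)$ the values after the whole stream has been processed. For $T \subseteq e_t$ the level is $\mathrm{lev}_t(T) = \lceil \lg (b(T)/c(e_t)) \rceil$ ($\lg$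 = base-2 logarithm), and $T$ is effective at time $t$ if $\mathrm{lev}_t(T) > \mathrm{eff}_t(v)$ for every $v \in T$ (the empty set is vacuously effective). When $e_t$ arrives, COVER computes an effective subset $T \subseteq e_t$ of largest benefit $b(T)$ (any such subset) and, for every $v \in T$, sets $\mathrm{eid}(v) \leftarrow \mathrm{id}(e_t)$ and $\mathrm{eff}(v) \leftarrow \mathrm{lev}_t(T)$. *)

theory Defs
  imports Complex_Main
begin

text \<open>A stream is a finite list of edges; the t-th element is (e_t, c(e_t)).
  The identifier id(e_t) is the stream position t.  Benefits b : V -> rat.
  eid(v) :: nat option (None = NULL), eff(v) :: int option (None = -infinity).\<close>

type_synonym 'v stream = "('v set \<times> rat) list"
type_synonym 'v cstate = "('v \<Rightarrow> nat option) \<times> ('v \<Rightarrow> int option)"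

definition weighted_hypergraph :: "'v set \<Rightarrow> ('v \<Rightarrow> rat) \<Rightarrow> 'v stream \<Rightarrow> bool" where
  "weighted_hypergraph V b es \<longleftrightarrow> finite V \<and> (\<forall>v\<in>V. b v > 0) \<and>
     (\<forall>i<length es. fst (es!i) \<noteq> {} \<and> fst (es!i) \<subseteq> V \<and> snd (es!i) > 0)"

definition edge_cost :: "'v stream \<Rightarrow> nat set \<Rightarrow> rat" where
  "edge_cost es F = (\<Sum>i\<in>F. snd (es!i))"

definition edge_cover :: "'v set \<Rightarrow> 'v stream \<Rightarrow> nat set \<Rightarrow> bool" where
  "edge_cover V es F \<longleftrightarrow> F \<subseteq> {..<length es} \<and> (\<Union>i\<in>F. fst (es!i)) = V"

definition min_edge_cover :: "'v set \<Rightarrow> 'v stream \<Rightarrow> nat set \<Rightarrow> bool" where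
  "min_edge_cover V es F \<longleftrightarrow> edge_cover V es F \<and>
     (\<forall>F'. edge_cover V es F' \<longrightarrow> edge_cost es F \<le> edge_cost es F')"

definition lev :: "('v \<Rightarrow> rat) \<Rightarrow> 'v stream \<Rightarrow> nat \<Rightarrow> 'v set \<Rightarrow> int" where
  "lev b es t T = \<lceil>log 2 (real_of_rat (sum b T / snd (es!t)))\<rceil>"

text \<open>State before e_t is processed, given the chosen subsets Ts.\<close>
fun cover_state :: "('v \<Rightarrow> rat) \<Rightarrow> 'v stream \<Rightarrow> 'v set list \<Rightarrow> nat \<Rightarrow> 'v cstate" where
  "cover_state b es Ts 0 = ((\<lambda>_. None), (\<lambda>_. None))"
| "cover_state b es Ts (Suc t) =
     (let (eid, eff) = cover_state b es Ts t; T = Ts!t in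
       ((\<lambda>v. if v \<in> T then Some t else eid v),
        (\<lambda>v. if v \<in> T then Some (lev b es t T) else eff v)))"

definition effective :: "('v \<Rightarrow> rat) \<Rightarrow> 'v stream \<Rightarrow> 'v set list \<Rightarrow> nat \<Rightarrow> 'v set \<Rightarrow> bool" where
  "effective b es Ts t T \<longleftrightarrow>
     (\<forall>v\<in>T. case snd (cover_state b es Ts t) v of None \<Rightarrow> True | Some k \<Rightarrow> lev b es t T > k)"

definition cover_run :: "('v \<Rightarrow> rat) \<Rightarrow> 'v stream \<Rightarrow> 'v set list \<Rightarrow> bool" where
  "cover_run b es Ts \<longleftrightarrow> length Ts = length es \<and>
     (\<forall>t<length es. Ts!t \<subseteq> fst (es!t) \<and> effective b es Ts t (Ts!t) \<and>
        (\<forall>T'. T' \<subseteq> fst (es!t) \<longrightarrow> effective b es Ts t T' \<longrightarrow> sum b T' \<le> sum b (Ts!t)))"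

definition final_eid where "final_eid b es Ts = fst (cover_state b es Ts (length es))"
definition final_eff where "final_eff b es Ts = snd (cover_state b es Ts (length es))"

definition I_le :: "'v set \<Rightarrow> ('v \<Rightarrow> rat) \<Rightarrow> 'v stream \<Rightarrow> 'v set list \<Rightarrow> int \<Rightarrow> 'v set" where
  "I_le V b es Ts r = {v\<in>V. case final_eff b es Ts v of None \<Rightarrow> True | Some k \<Rightarrow> k \<le> r}"

definition S_gt :: "'v set \<Rightarrow> ('v \<Rightarrow> rat) \<Rightarrow> 'v stream \<Rightarrow> 'v set list \<Rightarrow> int \<Rightarrow> nat set" where
  "S_gt V b es Ts r = {i. i < length es \<and> (\<exists>v\<in>V.
      (case final_eff b es Ts v of None \<Rightarrow> False | Some k \<Rightarrow> k > r) \<and> final_eid b es Ts v = Some i)}"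

end

theory Submission
  imports Defs
begin

text \<open>Fix r and an edge e. The vertices of e whose final level is at most r have
  benefit at most 2^r c(e): otherwise they form an effective subset at the time e arrives,
  disjoint from the subset COVER chose, and their union with it would have larger benefit.
  Summing over a cover gives b(I(\<le> r)) \<le> 2^r c(OPT), and for r = r* + 1 the maximality of r*
  yields \<epsilon> b(V) < 2^(r*+1) c(OPT). Conversely, each edge of S(> r*) costs less than
  2^(1 - level) times the benefit of its chosen subset, and the levels at which a fixed vertex
  is chosen are distinct and exceed r*, so c(S(> r*)) \<le> 2^(1 - r*) b(V) < 4 c(OPT) / \<epsilon>.\<close>

lemma sum_UN_le:
  fixes f :: "'a \<Rightarrow> 'b::ordered_ab_group_add"
  assumes "finite I" "\<And>i. i \<in> I \<Longrightarrow> finite (A i)" "\<And>x. x \<in> (\<Union>i\<in>I. A i) \<Longrightarrow> 0 \<le> f x"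
  shows "sum f (\<Union>i\<in>I. A i) \<le> (\<Sum>i\<in>I. sum f (A i))"
  using assms
proof (induction I rule: finite_induct)
  case (insert i I)
  have "sum f (\<Union>j\<in>insert i I. A j) = sum f (A i) + sum f (\<Union>j\<in>I. A j) - sum f (A i \<inter> (\<Union>j\<in>I. A j))"
    using insert.prems insert.hyps by (simp add: sum_Un)
  also have "\<dots> \<le> sum f (A i) + sum f (\<Union>j\<in>I. A j)"
    using insert.prems by (auto intro!: sum_nonneg)
  also have "\<dots> \<le> sum f (A i) + (\<Sum>j\<in>I. sum f (A j))"
    using insert by (simp add: add_left_mono)
  finally show ?case
    using insert.hyps by simp
qed simp

lemma sum_two_powr_distinct_le:
  fixes K :: "int set" and r :: int
  assumes "finite K" "\<And>k. k \<in> K \<Longrightarrow> r < k"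
  shows "(\<Sum>k\<in>K. (2::real) powr - k) \<le> 2 powr - r"
proof -
  define j where "j k = nat (k - r - 1)" for k
  have K_eq: "k = r + 1 + int (j k)" if "k \<in> K" for k
    using assms(2)[OF that] by (simp add: j_def)
  have inj: "inj_on j K"
    by (metis K_eq inj_onI)
  have "(\<Sum>k\<in>K. (2::real) powr - k) = (\<Sum>k\<in>K. 2 powr - (r + 1) * (1/2) ^ j k)"
  proof (rule sum.cong)
    fix k assume "k \<in> K"
    then show "(2::real) powr - k = 2 powr - (r + 1) * (1/2) ^ j k"
      by (subst K_eq) (auto simp: powr_add powr_diff powr_realpow power_divide simp flip: powr_minus_divide)
  qed simp
  also have "\<dots> = 2 powr - (r + 1) * (\<Sum>i\<in>j ` K. (1/2) ^ i)"
    by (simp add: sum_distrib_left sum.reindex[OF inj])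
  also have "\<dots> \<le> 2 powr - (r + 1) * 2"
  proof (rule mult_left_mono)
    have "(\<Sum>i\<in>j ` K. (1/2::real) ^ i) \<le> (\<Sum>i. (1/2) ^ i)"
      using assms(1) by (intro sum_le_suminf) auto
    then show "(\<Sum>i\<in>j ` K. (1/2::real) ^ i) \<le> 2"
      by (simp add: suminf_geometric)
  qed simp
  also have "\<dots> = 2 powr - r"
    by (simp add: powr_diff powr_minus)
  finally show ?thesis .
qed

lemma less_ceiling_log2_iff:
  fixes x :: real
  assumes "0 < x"
  shows "r < \<lceil>log 2 x\<rceil> \<longleftrightarrow> 2 powr r < x"
  using assms by (simp add: less_ceiling_iff less_log_iff)

lemma eff_Suc:
  "snd (cover_state b es Ts (Suc t)) v =
     (if v \<in> Ts!t then Some (lev b es t (Ts!t)) else snd (cover_state b es Ts t) v)"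
  by (cases "cover_state b es Ts t") (simp add: Let_def)

lemma eid_Suc:
  "fst (cover_state b es Ts (Suc t)) v =
     (if v \<in> Ts!t then Some t else fst (cover_state b es Ts t) v)"
  by (cases "cover_state b es Ts t") (simp add: Let_def)

declare cover_state.simps(2)[simp del]

lemma effective_chosen:
  "cover_run b es Ts \<Longrightarrow> t < length es \<Longrightarrow> effective b es Ts t (Ts!t)"
  unfolding cover_run_def by blast

lemma eff_mono:
  assumes run: "cover_run b es Ts" and "t \<le> t'" "t' \<le> length es"
    and "snd (cover_state b es Ts t) v = Some k"
  shows "\<exists>k'. snd (cover_state b es Ts t') v = Some k' \<and> k \<le> k'"
  using assms(2,3)
proof (induction t' rule: dec_induct)
  case base
  then show ?case using assms(4) by simp
next
  case (step m)
  then obtain k' where k': "snd (cover_state b es Ts m) v = Some k'" "k \<le> k'"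
    by auto
  have "v \<in> Ts!m \<Longrightarrow> k' < lev b es m (Ts!m)"
    using effective_chosen[OF run, of m] step.hyps(2) step.prems k'(1)
    unfolding effective_def by fastforce
  then show ?case
    using k' by (auto simp: eff_Suc)
qed

lemma final_eff_ge_lev_chosen:
  assumes run: "cover_run b es Ts" and "t < length es" "v \<in> Ts!t"
  shows "\<exists>k. final_eff b es Ts v = Some k \<and> lev b es t (Ts!t) \<le> k"
  using eff_mono[OF run, of "Suc t" "length es" v] assms
  unfolding final_eff_def by (simp add: eff_Suc)

lemma eid_SomeD:
  assumes "fst (cover_state b es Ts t') v = Some t"
  shows "t < t' \<and> v \<in> Ts!t \<and> snd (cover_state b es Ts t') v = Some (lev b es t (Ts!t))"
  using assms by (induction t') (auto simp: eid_Suc eff_Suc split: if_splits)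

text \<open>A vertex is re-covered only by subsets of strictly higher level, so the levels of the
  chosen subsets containing a fixed vertex are pairwise distinct.\<close>
lemma inj_on_lev_chosen:
  assumes run: "cover_run b es Ts"
  shows "inj_on (\<lambda>t. lev b es t (Ts!t)) {t. t < length es \<and> v \<in> Ts!t}"
proof (rule linorder_inj_onI')
  fix t1 t2 assume t1: "t1 \<in> {t. t < length es \<and> v \<in> Ts!t}"
    and t2: "t2 \<in> {t. t < length es \<and> v \<in> Ts!t}" and "t1 < t2"
  then obtain k where k: "snd (cover_state b es Ts t2) v = Some k" "lev b es t1 (Ts!t1) \<le> k"
    using eff_mono[OF run, of "Suc t1" t2 v] by (auto simp: eff_Suc)
  have "k < lev b es t2 (Ts!t2)"
    using effective_chosen[OF run, of t2] t2 k(1) unfolding effective_def by fastforce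
  then show "lev b es t1 (Ts!t1) \<noteq> lev b es t2 (Ts!t2)"
    using k(2) by simp
qed

lemma lev_gt_iff:
  assumes "0 < sum b T" "0 < snd (es!t)"
  shows "r < lev b es t T \<longleftrightarrow> 2 powr r * real_of_rat (snd (es!t)) < real_of_rat (sum b T)"
proof -
  have "0 < real_of_rat (sum b T / snd (es!t))"
    using assms by simp
  then show ?thesis
    using assms unfolding lev_def
    by (simp add: less_ceiling_log2_iff of_rat_divide pos_less_divide_eq)
qed

lemma lev_mono:
  assumes "sum b A \<le> sum b B" "0 < sum b A" "0 < snd (es!t)"
  shows "lev b es t A \<le> lev b es t B"
proof -
  have "real_of_rat (sum b A / snd (es!t)) \<le> real_of_rat (sum b B / snd (es!t))"
    using assms by (simp add: of_rat_less_eq divide_right_mono)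
  then show ?thesis
    using assms unfolding lev_def by (intro ceiling_mono) simp
qed

lemma cost_lt_lev:
  assumes "0 < sum b T" "0 < snd (es!t)"
  shows "real_of_rat (snd (es!t)) < 2 powr (1 - real_of_int (lev b es t T)) * real_of_rat (sum b T)"
proof -
  have "2 powr (lev b es t T - 1) * real_of_rat (snd (es!t)) < real_of_rat (sum b T)"
    using lev_gt_iff[OF assms, of "lev b es t T - 1"] by simp
  then show ?thesis
    by (simp add: powr_diff field_simps)
qed

lemma effective_Un:
  assumes "effective b es Ts t A" "effective b es Ts t B"
    and "lev b es t A \<le> lev b es t (A \<union> B)" "lev b es t B \<le> lev b es t (A \<union> B)"
  shows "effective b es Ts t (A \<union> B)"
  using assms unfolding effective_def by (fastforce split: option.splits)

lemma subset_V_chosen: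
  "weighted_hypergraph V b es \<Longrightarrow> cover_run b es Ts \<Longrightarrow> t < length es \<Longrightarrow> Ts!t \<subseteq> V"
  unfolding weighted_hypergraph_def cover_run_def by blast

lemma sum_b_nonneg:
  "weighted_hypergraph V b es \<Longrightarrow> A \<subseteq> V \<Longrightarrow> 0 \<le> sum b A"
  unfolding weighted_hypergraph_def by (meson less_imp_le subsetD sum_nonneg)

lemma sum_edge_inter_I_le:
  assumes wh: "weighted_hypergraph V b es" and run: "cover_run b es Ts" and t: "t < length es"
  shows "real_of_rat (sum b (fst (es!t) \<inter> I_le V b es Ts r)) \<le> 2 powr r * real_of_rat (snd (es!t))"
proof (rule ccontr)
  define A where "A = fst (es!t) \<inter> I_le V b es Ts r"
  define T where "T = Ts!t"
  assume "\<not> ?thesis"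
  then have big: "2 powr r * real_of_rat (snd (es!t)) < real_of_rat (sum b A)"
    unfolding A_def by simp
  have cpos: "0 < snd (es!t)" and eV: "fst (es!t) \<subseteq> V" and finV: "finite V"
    using wh t unfolding weighted_hypergraph_def by auto
  have TV: "T \<subseteq> V" and Te: "T \<subseteq> fst (es!t)" and Teff: "effective b es Ts t T"
    and Tmax: "\<And>B. B \<subseteq> fst (es!t) \<Longrightarrow> effective b es Ts t B \<Longrightarrow> sum b B \<le> sum b T"
    using run t subset_V_chosen[OF wh run t] unfolding cover_run_def T_def by auto
  have Ae: "A \<subseteq> fst (es!t)"
    unfolding A_def by blast
  have "0 < 2 powr r * real_of_rat (snd (es!t))"
    using cpos by simp
  then have "0 < real_of_rat (sum b A)"
    using big by linarith
  then have Apos: "0 < sum b A"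
    by simp
  have levA: "r < lev b es t A"
    using lev_gt_iff[OF Apos cpos] big by simp
  have Aeff: "effective b es Ts t A"
    unfolding effective_def
  proof
    fix v assume "v \<in> A"
    then have "case final_eff b es Ts v of None \<Rightarrow> True | Some k \<Rightarrow> k \<le> r"
      unfolding A_def I_le_def by blast
    then show "case snd (cover_state b es Ts t) v of None \<Rightarrow> True | Some k \<Rightarrow> k < lev b es t A"
      using eff_mono[OF run, of t "length es" v] t levA
      unfolding final_eff_def by (fastforce split: option.splits)
  qed
  have levAT: "lev b es t A \<le> lev b es t T"
    using lev_mono[OF Tmax[OF Ae Aeff] Apos cpos] .
  have "A \<inter> T = {}"
  proof (rule ccontr)
    assume "A \<inter> T \<noteq> {}"
    then obtain v where "v \<in> A" "v \<in> T" by blast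
    then show False
      using final_eff_ge_lev_chosen[OF run t, of v] levA levAT
      unfolding A_def T_def I_le_def by fastforce
  qed
  then have sum_Un: "sum b (A \<union> T) = sum b A + sum b T"
    using eV Ae TV finV by (meson finite_subset sum.union_disjoint)
  have "lev b es t A \<le> lev b es t (A \<union> T)"
    using sum_Un sum_b_nonneg[OF wh TV] Apos cpos by (intro lev_mono) auto
  moreover have "lev b es t T \<le> lev b es t (A \<union> T)"
    using sum_Un Tmax[OF Ae Aeff] Apos cpos by (intro lev_mono) auto
  ultimately have "effective b es Ts t (A \<union> T)"
    using Aeff Teff by (intro effective_Un)
  then have "sum b (A \<union> T) \<le> sum b T"
    using Ae Te by (intro Tmax) auto
  then show False
    using sum_Un Apos by simp
qed

lemma sum_I_le_le_cover_cost:
  assumes wh: "weighted_hypergraph V b es" and run: "cover_run b es Ts"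
    and cover: "edge_cover V es F"
  shows "real_of_rat (sum b (I_le V b es Ts r)) \<le> 2 powr r * real_of_rat (edge_cost es F)"
proof -
  have F: "F \<subseteq> {..<length es}" "finite F" and V_eq: "V = (\<Union>i\<in>F. fst (es!i))"
    using cover unfolding edge_cover_def by (auto intro: finite_subset)
  have finV: "finite V" and bpos: "\<And>v. v \<in> V \<Longrightarrow> 0 < b v"
    using wh unfolding weighted_hypergraph_def by auto
  have "I_le V b es Ts r = (\<Union>i\<in>F. fst (es!i) \<inter> I_le V b es Ts r)"
    using V_eq unfolding I_le_def by blast
  then have "real_of_rat (sum b (I_le V b es Ts r))
      = (\<Sum>v\<in>(\<Union>i\<in>F. fst (es!i) \<inter> I_le V b es Ts r). real_of_rat (b v))"
    by (simp add: of_rat_sum)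
  also have "\<dots> \<le> (\<Sum>i\<in>F. \<Sum>v\<in>fst (es!i) \<inter> I_le V b es Ts r. real_of_rat (b v))"
    using F(2) finV bpos V_eq
    by (intro sum_UN_le) (auto intro: finite_subset less_imp_le)
  also have "\<dots> \<le> (\<Sum>i\<in>F. 2 powr r * real_of_rat (snd (es!i)))"
    using sum_edge_inter_I_le[OF wh run] F(1) by (intro sum_mono) (auto simp: of_rat_sum)
  also have "\<dots> = 2 powr r * real_of_rat (edge_cost es F)"
    by (simp add: edge_cost_def of_rat_sum sum_distrib_left)
  finally show ?thesis .
qed

lemma sum_lev_chosen_le:
  assumes run: "cover_run b es Ts" and "finite X"
    and X: "\<And>t. t \<in> X \<Longrightarrow> t < length es \<and> v \<in> Ts!t \<and> r < lev b es t (Ts!t)"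
  shows "(\<Sum>t\<in>X. 2 powr (1 - real_of_int (lev b es t (Ts!t)))) \<le> 2 powr (1 - real_of_int r)"
proof -
  have inj: "inj_on (\<lambda>t. lev b es t (Ts!t)) X"
    using X by (intro inj_on_subset[OF inj_on_lev_chosen[OF run, of v]]) blast
  have "(\<Sum>t\<in>X. 2 powr (1 - real_of_int (lev b es t (Ts!t)))) = 2 * (\<Sum>k\<in>(\<lambda>t. lev b es t (Ts!t)) ` X. 2 powr - k)"
    by (simp add: sum.reindex[OF inj] sum_distrib_left powr_diff powr_minus_divide)
  also have "\<dots> \<le> 2 * 2 powr - r"
    using assms(2) X by (intro mult_left_mono sum_two_powr_distinct_le) auto
  also have "\<dots> = 2 powr (1 - real_of_int r)"
    by (simp add: powr_diff powr_minus_divide)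
  finally show ?thesis .
qed

lemma edge_cost_nonneg:
  assumes "weighted_hypergraph V b es" "F \<subseteq> {..<length es}"
  shows "0 \<le> edge_cost es F"
  using assms unfolding weighted_hypergraph_def edge_cost_def
  by (intro sum_nonneg) (auto intro: less_imp_le)

lemma S_gt_memD:
  assumes "t \<in> S_gt V b es Ts r"
  shows "t < length es \<and> (\<exists>v\<in>V. v \<in> Ts!t) \<and> r < lev b es t (Ts!t)"
proof -
  obtain v k where v: "v \<in> V" "final_eff b es Ts v = Some k" "r < k"
    "final_eid b es Ts v = Some t" and "t < length es"
    using assms unfolding S_gt_def by (auto split: option.splits)
  then show ?thesis
    using eid_SomeD[of b es Ts "length es" v t] unfolding final_eid_def final_eff_def by auto
qed

lemma cost_le_sum_chosen:
  assumes wh: "weighted_hypergraph V b es" and run: "cover_run b es Ts"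
    and t: "t < length es" and u: "u \<in> Ts!t"
  shows "real_of_rat (snd (es!t))
    \<le> (\<Sum>v | v \<in> V \<and> v \<in> Ts!t. 2 powr (1 - real_of_int (lev b es t (Ts!t))) * real_of_rat (b v))"
proof -
  have TV: "Ts!t \<subseteq> V"
    using subset_V_chosen[OF wh run t] .
  have "0 < sum b (Ts!t)"
    using wh TV u unfolding weighted_hypergraph_def
    by (intro sum_pos2[of _ u]) (auto intro: finite_subset less_imp_le)
  moreover have "0 < snd (es!t)"
    using wh t unfolding weighted_hypergraph_def by blast
  ultimately have "real_of_rat (snd (es!t))
      < 2 powr (1 - real_of_int (lev b es t (Ts!t))) * real_of_rat (sum b (Ts!t))"
    by (rule cost_lt_lev)
  also have "\<dots> = (\<Sum>v | v \<in> V \<and> v \<in> Ts!t. 2 powr (1 - real_of_int (lev b es t (Ts!t))) * real_of_rat (b v))"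
    using TV by (auto simp: of_rat_sum sum_distrib_left intro!: sum.cong)
  finally show ?thesis
    by simp
qed

lemma edge_cost_S_gt_le:
  assumes wh: "weighted_hypergraph V b es" and run: "cover_run b es Ts"
  shows "real_of_rat (edge_cost es (S_gt V b es Ts r)) \<le> 2 powr (1 - real_of_int r) * real_of_rat (sum b V)"
proof -
  define S where "S = S_gt V b es Ts r"
  define w where "w t = 2 powr (1 - real_of_int (lev b es t (Ts!t)))" for t
  have finV: "finite V" and bpos: "\<And>v. v \<in> V \<Longrightarrow> 0 < b v"
    using wh unfolding weighted_hypergraph_def by auto
  have finS: "finite S"
    unfolding S_def S_gt_def by simp
  have cost_le: "real_of_rat (snd (es!t)) \<le> (\<Sum>v | v \<in> V \<and> v \<in> Ts!t. w t * real_of_rat (b v))"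
    if "t \<in> S" for t
    using S_gt_memD[of t V b es Ts r] that unfolding S_def w_def
    by (auto intro: cost_le_sum_chosen[OF wh run])
  have "real_of_rat (edge_cost es S) \<le> (\<Sum>t\<in>S. \<Sum>v | v \<in> V \<and> v \<in> Ts!t. w t * real_of_rat (b v))"
    unfolding edge_cost_def of_rat_sum using cost_le by (rule sum_mono)
  also have "\<dots> = (\<Sum>v\<in>V. real_of_rat (b v) * (\<Sum>t | t \<in> S \<and> v \<in> Ts!t. w t))"
    using finS finV by (simp add: sum.swap_restrict[of S V] sum_distrib_left mult.commute)
  also have "\<dots> \<le> (\<Sum>v\<in>V. real_of_rat (b v) * 2 powr (1 - real_of_int r))"
  proof (intro sum_mono mult_left_mono)
    fix v assume "v \<in> V"
    then show "0 \<le> real_of_rat (b v)"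
      using bpos by (simp add: less_imp_le)
    show "(\<Sum>t | t \<in> S \<and> v \<in> Ts!t. w t) \<le> 2 powr (1 - real_of_int r)"
      unfolding w_def using finS S_gt_memD[of _ V b es Ts r] unfolding S_def
      by (intro sum_lev_chosen_le[OF run]) auto
  qed
  also have "\<dots> = 2 powr (1 - real_of_int r) * real_of_rat (sum b V)"
    by (simp add: of_rat_sum sum_distrib_right mult.commute)
  finally show ?thesis
    unfolding S_def .
qed

theorem lemma11:
  fixes V :: "'v set" and b :: "'v \<Rightarrow> rat" and es :: "'v stream"
    and Ts :: "'v set list" and OPT :: "nat set" and \<epsilon> :: real and rstar :: int
  assumes "weighted_hypergraph V b es"
    and "\<forall>v\<in>V. \<exists>i<length es. v \<in> fst (es!i)"
    and "min_edge_cover V es OPT"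
    and "cover_run b es Ts"
    and "0 < \<epsilon>" and "\<epsilon> < 1"
    and "real_of_rat (sum b (I_le V b es Ts rstar)) \<le> \<epsilon> * real_of_rat (sum b V)"
    and "\<forall>r. real_of_rat (sum b (I_le V b es Ts r)) \<le> \<epsilon> * real_of_rat (sum b V) \<longrightarrow> r \<le> rstar"
  shows "real_of_rat (edge_cost es (S_gt V b es Ts rstar)) < 8 * real_of_rat (edge_cost es OPT) / \<epsilon>"
proof -
  define B where "B = real_of_rat (sum b V)"
  define C where "C = real_of_rat (edge_cost es OPT)"
  have C_nonneg: "0 \<le> C"
    using assms(3) unfolding C_def min_edge_cover_def edge_cover_def
    by (simp add: edge_cost_nonneg[OF assms(1)])
  have "\<epsilon> * B < real_of_rat (sum b (I_le V b es Ts (rstar + 1)))"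
    using assms(8)[rule_format, of "rstar + 1"] unfolding B_def by linarith
  also have "\<dots> \<le> 2 powr (rstar + 1) * C"
    using assms(3) unfolding C_def min_edge_cover_def
    by (intro sum_I_le_le_cover_cost[OF assms(1,4)]) blast
  finally have "B < 2 powr (rstar + 1) * C / \<epsilon>"
    using assms(5) by (simp add: pos_less_divide_eq mult.commute)
  have "real_of_rat (edge_cost es (S_gt V b es Ts rstar)) \<le> 2 powr (1 - real_of_int rstar) * B"
    unfolding B_def using edge_cost_S_gt_le[OF assms(1,4)] .
  also have "\<dots> < 2 powr (1 - real_of_int rstar) * (2 powr (rstar + 1) * C / \<epsilon>)"
    using \<open>B < _\<close> by (rule mult_strict_left_mono) simp
  also have "\<dots> = 4 * C / \<epsilon>"
    by (simp add: powr_add powr_diff)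
  also have "\<dots> \<le> 8 * C / \<epsilon>"
    using C_nonneg assms(5) by (simp add: divide_right_mono)
  finally show ?thesis
    unfolding C_def .
qed

end
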